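(* Fix an integer $m\ge 3$ and a finite complete graph $K$ on at least $m$ vertices. Set \[ \mathcal{O}=\max_{\nu\in\Delta^K}\bigl(2m\cdot\beta(\nu;C_m)+\beta(\nu;P_{m+1})\bigr). \] If $\mu\in\Delta^K$ achieves $\mathcal{O}$, then for all $x\in V(K)$, \[ \frac{m}{2}\bar\mu(x)+\bigl(1-\bar\mu(x)\bigr)^m+\frac{1}{2\mathcal{O}}\cdot\bar\mu(x)\Bigl(\frac{1-\bar\mu(x)}{m-1}\Bigr)^{m-1}\ge 1. \]
   Context: $C_m$ is the cycle on $m$ vertices and $P_{m+1}$ the path on $m+1$ vertices. $\Delta^K$ is the set of probability measures on $E(K)$. For $\mu\in\Delta^K$ and a subgraph $H'\subseteq K$, $\mu(H')=\prod_{e\in E(H')}\mu(e)$; $\beta(\mu;H)=\sum_{H'}\mu(H')$ over all subgraphs $H'$ of $K$ isomorphic to $H$; and $\bar\mu(x)=\sum_{y\in V(K)\setminus\{x\}}\mu(xy)$. *)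

theory Defs
  imports Complex_Main
begin

definition edges :: "'a set \<Rightarrow> 'a set set" where
  "edges V = {e. e \<subseteq> V \<and> card e = 2}"

definition Delta :: "'a set \<Rightarrow> ('a set \<Rightarrow> real) set" where
  "Delta V = {\<mu>. (\<forall>e\<in>edges V. 0 \<le> \<mu> e) \<and> (\<Sum>e\<in>edges V. \<mu> e) = 1}"

text \<open>Edge sets of subgraphs of K isomorphic to the cycle C_m (vertices f 0, ..., f (m-1)).
  Since C_m has no isolated vertices, such a subgraph is determined by its edge set.\<close>
definition cycle_copies :: "'a set \<Rightarrow> nat \<Rightarrow> 'a set set set" where
  "cycle_copies V m = {{{f i, f ((i + 1) mod m)} | i. i < m} | f.
      inj_on f {0..<m} \<and> f ` {0..<m} \<subseteq> V}"

definition path_copies :: "'a set \<Rightarrow> nat \<Rightarrow> 'a set set set" where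
  "path_copies V m = {{{f i, f (i + 1)} | i. i < m} | f.
      inj_on f {0..m} \<and> f ` {0..m} \<subseteq> V}"

definition weight :: "('a set \<Rightarrow> real) \<Rightarrow> 'a set set \<Rightarrow> real" where
  "weight \<mu> H = (\<Prod>e\<in>H. \<mu> e)"

definition beta_cycle :: "'a set \<Rightarrow> nat \<Rightarrow> ('a set \<Rightarrow> real) \<Rightarrow> real" where
  "beta_cycle V m \<mu> = (\<Sum>H\<in>cycle_copies V m. weight \<mu> H)"

definition beta_path :: "'a set \<Rightarrow> nat \<Rightarrow> ('a set \<Rightarrow> real) \<Rightarrow> real" where
  "beta_path V m \<mu> = (\<Sum>H\<in>path_copies V m. weight \<mu> H)"

definition objective :: "'a set \<Rightarrow> nat \<Rightarrow> ('a set \<Rightarrow> real) \<Rightarrow> real" where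
  "objective V m \<nu> = 2 * real m * beta_cycle V m \<nu> + beta_path V m \<nu>"

definition mubar :: "'a set \<Rightarrow> ('a set \<Rightarrow> real) \<Rightarrow> 'a \<Rightarrow> real" where
  "mubar V \<mu> x = (\<Sum>y\<in>V - {x}. \<mu> {x, y})"

end

theory Submission
  imports Defs "HOL-Analysis.Convex"
begin

text \<open>
  Fix a vertex x and write b for mubar(x). Multiplying the weights of the edges at x by s \<ge> 0
  and renormalizing gives another measure. Every copy of C_m and of P_(m+1) has m edges, so the
  objective is a homogeneous form of degree m, and maximality of mu yields
  sum_H c_H s^(d_H) mu(H) \<le> (1 - b + s b)^m O, where O is the optimal value, c_H the
  coefficient of the copy H (2m for cycles, 1 for paths) and d_H the degree of x in H.
  Equality holds at s = 1, so the derivative there vanishes: sum_H c_H d_H mu(H) = m b O;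
  at s = 0 the copies avoiding x weigh at most (1 - b)^m O. Splitting the copies by
  d_H = 0, d_H = 1 and d_H \<ge> 2, and noting that d_H = 1 only for paths with an endpoint at x,
  gives O \<le> (1 - b)^m O + m b O / 2 + W / 2, where W is the weight of the paths starting
  at x. Peeling off the first edge of such a path and applying AM-GM repeatedly bounds W by
  b ((1 - b) / (m - 1))^(m - 1).
\<close>

subsection \<open>Edges of the complete graph\<close>

lemma finite_edges: "finite V \<Longrightarrow> finite (edges V)"
  unfolding edges_def by (rule finite_subset[of _ "Pow V"]) auto

lemma doubleton_in_edges: "a \<in> V \<Longrightarrow> b \<in> V \<Longrightarrow> a \<noteq> b \<Longrightarrow> {a, b} \<in> edges V"
  by (simp add: edges_def)

lemma edges_mono: "V \<subseteq> W \<Longrightarrow> edges V \<subseteq> edges W"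
  unfolding edges_def by auto

lemma edges_remove:
  assumes "y \<in> V"
  shows "edges V = edges (V - {y}) \<union> (\<lambda>v. {y, v}) ` (V - {y})"
proof (intro equalityI subsetI)
  fix e assume e: "e \<in> edges V"
  then obtain a b where "a \<noteq> b" "e = {a, b}"
    unfolding edges_def by (auto simp: card_2_iff)
  with e show "e \<in> edges (V - {y}) \<union> (\<lambda>v. {y, v}) ` (V - {y})"
    by (auto simp: edges_def insert_commute)
qed (use assms in \<open>auto simp: edges_def\<close>)

lemma inj_doubleton: "inj (\<lambda>v. {y, v})"
  by (auto intro: injI simp: doubleton_eq_iff)

lemma sum_edges_remove:
  assumes "finite V" "y \<in> V"
  shows "(\<Sum>e\<in>edges V. f e) = (\<Sum>e\<in>edges (V - {y}). f e) + (\<Sum>v\<in>V - {y}. f {y, v})"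
proof -
  have "edges (V - {y}) \<inter> (\<lambda>v. {y, v}) ` (V - {y}) = {}"
    by (auto simp: edges_def)
  then show ?thesis
    unfolding edges_remove[OF assms(2)] using assms(1)
    by (simp add: sum.union_disjoint finite_edges sum.reindex inj_on_subset[OF inj_doubleton])
qed

subsection \<open>Paths as vertex lists\<close>

fun path_edges :: "'a list \<Rightarrow> 'a set set" where
  "path_edges (a # b # r) = insert {a, b} (path_edges (b # r))"
| "path_edges _ = {}"

lemma path_edges_subset_set: "e \<in> path_edges xs \<Longrightarrow> e \<subseteq> set xs"
  by (induction xs rule: path_edges.induct) auto

lemma path_edges_subset_edges: "distinct xs \<Longrightarrow> set xs \<subseteq> V \<Longrightarrow> path_edges xs \<subseteq> edges V"
  by (induction xs rule: path_edges.induct) (auto simp: edges_def)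

lemma finite_path_edges: "finite (path_edges xs)"
  by (induction xs rule: path_edges.induct) auto

lemma card_path_edges: "distinct xs \<Longrightarrow> card (path_edges xs) = length xs - 1"
proof (induction xs rule: path_edges.induct)
  case (1 a b r)
  then have "{a, b} \<notin> path_edges (b # r)"
    using path_edges_subset_set by fastforce
  with 1 show ?case by (simp add: finite_path_edges)
qed auto

lemma weight_path_edges_Cons:
  assumes "distinct (a # b # r)"
  shows "weight \<nu> (path_edges (a # b # r)) = \<nu> {a, b} * weight \<nu> (path_edges (b # r))"
proof -
  have "{a, b} \<notin> path_edges (b # r)"
    using assms path_edges_subset_set by fastforce
  then show ?thesis by (simp add: weight_def finite_path_edges)
qed

lemma path_edges_snoc:
  "path_edges (xs @ [b]) = (if xs = [] then {} else insert {last xs, b} (path_edges xs))"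
  by (induction xs rule: path_edges.induct) auto

lemma path_edges_rev: "path_edges (rev xs) = path_edges xs"
proof (induction xs)
  case (Cons a r)
  have "path_edges (rev r @ [a]) = (if r = [] then {} else insert {hd r, a} (path_edges r))"
    by (simp add: path_edges_snoc last_rev Cons.IH)
  then show ?case by (cases r) (simp_all add: insert_commute)
qed simp

lemma path_edges_nth: "Suc i < length xs \<Longrightarrow> {xs ! i, xs ! Suc i} \<in> path_edges xs"
  by (induction xs arbitrary: i rule: path_edges.induct) (auto simp: less_Suc_eq_0_disj)

lemma path_edges_map_upt:
  "path_edges (map f [a..<Suc (a + k)]) = (\<lambda>i. {f i, f (Suc i)}) ` {a..<a + k}"
proof (induction k arbitrary: a)
  case (Suc k)
  have "{a..<a + Suc k} = insert a {Suc a..<Suc a + k}" by auto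
  with Suc[of "Suc a"] show ?case by (simp add: upt_conv_Cons del: upt_Suc)
qed simp

definition vertex_degree :: "'a set set \<Rightarrow> 'a \<Rightarrow> nat" where
  "vertex_degree H x = card {e \<in> H. x \<in> e}"

lemma two_le_vertex_degree:
  assumes "finite H" "{a, x} \<in> H" "{x, c} \<in> H" "a \<noteq> c"
  shows "2 \<le> vertex_degree H x"
proof -
  have "{a, x} \<noteq> {x, c}"
    using assms(4) by (auto simp: doubleton_eq_iff)
  then have "2 = card {{a, x}, {x, c}}"
    by simp
  also have "\<dots> \<le> vertex_degree H x"
    unfolding vertex_degree_def by (rule card_mono) (use assms in auto)
  finally show ?thesis .
qed

lemma vertex_degree_eq_1E:
  assumes "vertex_degree H x = 1"
  obtains e where "e \<in> H" "x \<in> e"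
  using assms unfolding vertex_degree_def by (metis (mono_tags, lifting) card_1_singletonE insertI1 mem_Collect_eq)

lemma vertex_degree_path_edges_eq_1:
  assumes "distinct xs" "vertex_degree (path_edges xs) x = 1"
  shows "x = hd xs \<or> x = last xs"
proof -
  obtain e where "e \<in> path_edges xs" "x \<in> e"
    using assms(2) by (rule vertex_degree_eq_1E)
  then have "x \<in> set xs"
    using path_edges_subset_set by blast
  then obtain j where j: "j < length xs" "xs ! j = x"
    by (metis in_set_conv_nth)
  show ?thesis
  proof (rule ccontr)
    assume not_end: "\<not> (x = hd xs \<or> x = last xs)"
    have "xs \<noteq> []"
      using j(1) by auto
    then have "j \<noteq> 0" "j \<noteq> length xs - 1"
      using j(2) not_end by (metis hd_conv_nth, metis last_conv_nth)
    then have inner: "0 < j" "Suc j < length xs"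
      using j(1) by linarith+
    have "{xs ! (j - 1), x} \<in> path_edges xs"
      using path_edges_nth[of "j - 1" xs] inner j(2) by simp
    moreover have "{x, xs ! Suc j} \<in> path_edges xs"
      using path_edges_nth[of j xs] inner j(2) by simp
    moreover have "xs ! (j - 1) \<noteq> xs ! Suc j"
      using inner assms(1) by (simp add: nth_eq_iff_index_eq)
    ultimately have "2 \<le> vertex_degree (path_edges xs) x"
      by (intro two_le_vertex_degree finite_path_edges)
    with assms(2) show False by simp
  qed
qed

definition distinct_lists :: "'a set \<Rightarrow> nat \<Rightarrow> 'a list set" where
  "distinct_lists W k = {ys. distinct ys \<and> length ys = k \<and> set ys \<subseteq> W}"

lemma finite_distinct_lists: "finite W \<Longrightarrow> finite (distinct_lists W k)"
  unfolding distinct_lists_def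
  by (rule finite_subset[OF _ finite_lists_length_eq[of W k]]) auto

lemma distinct_lists_0: "distinct_lists W 0 = {[]}"
  by (auto simp: distinct_lists_def)

lemma sum_distinct_lists_Suc:
  assumes "finite W"
  shows "(\<Sum>ys\<in>distinct_lists W (Suc k). f ys) = (\<Sum>v\<in>W. \<Sum>zs\<in>distinct_lists (W - {v}) k. f (v # zs))"
proof -
  have "distinct_lists W (Suc k) = (\<lambda>(v, zs). v # zs) ` (SIGMA v:W. distinct_lists (W - {v}) k)"
  proof (intro equalityI subsetI)
    fix ys assume "ys \<in> distinct_lists W (Suc k)"
    then obtain v zs where "ys = v # zs" "v \<in> W" "zs \<in> distinct_lists (W - {v}) k"
      by (fastforce simp: distinct_lists_def length_Suc_conv)
    then show "ys \<in> (\<lambda>(v, zs). v # zs) ` (SIGMA v:W. distinct_lists (W - {v}) k)"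
      by force
  qed (auto simp: distinct_lists_def)
  moreover have "inj_on (\<lambda>(v, zs). v # zs) (SIGMA v:W. distinct_lists (W - {v}) k)"
    by (auto simp: inj_on_def)
  ultimately show ?thesis
    using assms by (simp add: sum.reindex sum.Sigma finite_distinct_lists case_prod_unfold)
qed

lemma mult_power_le_mean_power:
  fixes d M :: real
  assumes "0 \<le> d" "0 \<le> M"
  shows "d * (M / k) ^ k \<le> ((d + M) / Suc k) ^ Suc k"
proof (cases "k = 0")
  case False
  define x where "x i = (if i = 0 then d else M / k)" for i :: nat
  have "(\<Prod>i\<in>{0..k}. x i) powr (1 / card {0..k}) \<le> (\<Sum>i\<in>{0..k}. x i / card {0..k})"
    by (rule arith_geom_mean) (use assms in \<open>auto simp: x_def\<close>)
  moreover have "(\<Prod>i\<in>{0..k}. x i) = d * (M / k) ^ k"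
    by (simp add: x_def prod.atLeast_Suc_atMost)
  moreover have "(\<Sum>i\<in>{0..k}. x i / card {0..k}) = (d + M) / (1 + real k)"
    using False by (simp add: x_def sum.atLeast_Suc_atMost add_divide_distrib add.commute)
  ultimately have mean: "(d * (M / k) ^ k) powr (1 / (1 + real k)) \<le> (d + M) / (1 + real k)"
    by (simp add: add.commute)
  have "d * (M / k) ^ k = ((d * (M / k) ^ k) powr (1 / (1 + real k))) powr real (k + 1)"
    using assms by (simp add: powr_powr)
  also have "\<dots> = ((d * (M / k) ^ k) powr (1 / (1 + real k))) ^ (k + 1)"
    by (rule powr_realpow') simp_all
  also have "\<dots> \<le> ((d + M) / (1 + real k)) ^ (k + 1)"
    by (rule power_mono[OF mean]) simp
  finally show ?thesis by simp
qed (simp add: assms)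

lemma sum_path_weights_le:
  fixes \<nu> :: "'a set \<Rightarrow> real"
  assumes "finite W" "y \<notin> W" "\<forall>e\<in>edges (insert y W). 0 \<le> \<nu> e"
  shows "(\<Sum>ys\<in>distinct_lists W (Suc k). weight \<nu> (path_edges (y # ys)))
           \<le> (\<Sum>v\<in>W. \<nu> {y, v}) * ((\<Sum>e\<in>edges W. \<nu> e) / k) ^ k"
  using assms
proof (induction k arbitrary: W y)
  case 0
  then show ?case
    by (simp add: sum_distinct_lists_Suc distinct_lists_0 weight_def)
next
  case (Suc k)
  let ?mass = "\<lambda>U. \<Sum>e\<in>edges U. \<nu> e"
  have \<nu>_nonneg: "0 \<le> \<nu> e" if "e \<in> edges W" for e
    using that Suc.prems(3) edges_mono[of W "insert y W"] by auto
  have star_nonneg: "0 \<le> \<nu> {y, v}" if "v \<in> W" for v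
    using that Suc.prems(2,3) doubleton_in_edges[of y "insert y W" v] by fastforce
  have "(\<Sum>ys\<in>distinct_lists W (Suc (Suc k)). weight \<nu> (path_edges (y # ys)))
      = (\<Sum>v\<in>W. \<nu> {y, v} * (\<Sum>zs\<in>distinct_lists (W - {v}) (Suc k). weight \<nu> (path_edges (v # zs))))"
    unfolding sum_distinct_lists_Suc[OF Suc.prems(1)] sum_distrib_left
    by (intro sum.cong refl weight_path_edges_Cons)
      (use Suc.prems(2) in \<open>auto simp: distinct_lists_def\<close>)
  also have "\<dots> \<le> (\<Sum>v\<in>W. \<nu> {y, v} * ((\<Sum>u\<in>W - {v}. \<nu> {v, u}) * (?mass (W - {v}) / k) ^ k))"
  proof (intro sum_mono mult_left_mono star_nonneg)
    fix v assume "v \<in> W"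
    then show "(\<Sum>zs\<in>distinct_lists (W - {v}) (Suc k). weight \<nu> (path_edges (v # zs)))
        \<le> (\<Sum>u\<in>W - {v}. \<nu> {v, u}) * (?mass (W - {v}) / k) ^ k"
      using Suc.prems(1) \<nu>_nonneg by (intro Suc.IH) (auto simp: insert_absorb)
  qed
  also have "\<dots> \<le> (\<Sum>v\<in>W. \<nu> {y, v} * (((\<Sum>u\<in>W - {v}. \<nu> {v, u}) + ?mass (W - {v})) / Suc k) ^ Suc k)"
  proof (rule sum_mono)
    fix v assume v: "v \<in> W"
    have "0 \<le> (\<Sum>u\<in>W - {v}. \<nu> {v, u})"
      using v \<nu>_nonneg by (intro sum_nonneg) (auto simp: edges_def)
    moreover have "0 \<le> ?mass (W - {v})"
      using \<nu>_nonneg edges_mono[of "W - {v}" W] by (intro sum_nonneg) auto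
    ultimately show "\<nu> {y, v} * ((\<Sum>u\<in>W - {v}. \<nu> {v, u}) * (?mass (W - {v}) / k) ^ k)
        \<le> \<nu> {y, v} * (((\<Sum>u\<in>W - {v}. \<nu> {v, u}) + ?mass (W - {v})) / Suc k) ^ Suc k"
      using star_nonneg[OF v] by (intro mult_left_mono mult_power_le_mean_power)
  qed
  also have "\<dots> = (\<Sum>v\<in>W. \<nu> {y, v} * (?mass W / Suc k) ^ Suc k)"
  proof (rule sum.cong[OF refl])
    fix v assume "v \<in> W"
    then have "(\<Sum>u\<in>W - {v}. \<nu> {v, u}) + ?mass (W - {v}) = ?mass W"
      using sum_edges_remove[OF Suc.prems(1), of v \<nu>] by simp
    then show "\<nu> {y, v} * (((\<Sum>u\<in>W - {v}. \<nu> {v, u}) + ?mass (W - {v})) / Suc k) ^ Suc k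
        = \<nu> {y, v} * (?mass W / Suc k) ^ Suc k"
      by (simp only:)
  qed
  also have "\<dots> = (\<Sum>v\<in>W. \<nu> {y, v}) * (?mass W / Suc k) ^ Suc k"
    by (rule sum_distrib_right[symmetric])
  finally show ?case .
qed

subsection \<open>Copies of cycles and paths\<close>

lemma Suc_mod_if: "i < m \<Longrightarrow> Suc i mod m = (if Suc i = m then 0 else Suc i)"
  by (simp add: mod_Suc)

context
  fixes m :: nat and f :: "nat \<Rightarrow> 'a"
  assumes m: "3 \<le> m" and inj: "inj_on f {..<m}"
begin

lemma inj_on_cycle_edges: "inj_on (\<lambda>i. {f i, f (Suc i mod m)}) {..<m}"
proof (rule inj_onI)
  fix i j assume ij: "i \<in> {..<m}" "j \<in> {..<m}" and eq: "{f i, f (Suc i mod m)} = {f j, f (Suc j mod m)}"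
  have "Suc i mod m \<in> {..<m}" "Suc j mod m \<in> {..<m}"
    using m by simp_all
  moreover have "f i = f j \<or> f i = f (Suc j mod m) \<and> f (Suc i mod m) = f j"
    using eq by (auto simp: doubleton_eq_iff)
  ultimately consider "i = j" | "i = Suc j mod m" "Suc i mod m = j"
    using inj_onD[OF inj] ij by metis
  then show "i = j"
  proof cases
    case 2
    with ij m show ?thesis by (simp add: Suc_mod_if split: if_splits)
  qed
qed

lemma two_le_vertex_degree_cycle_edges:
  assumes "j < m"
  shows "2 \<le> vertex_degree ((\<lambda>i. {f i, f (Suc i mod m)}) ` {..<m}) (f j)"
proof -
  define p where "p = (if j = 0 then m - 1 else j - 1)"
  have p: "p < m" "Suc p mod m = j"
    using assms m by (auto simp: p_def Suc_mod_if)
  have "p \<noteq> Suc j mod m" "Suc j mod m < m"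
    using assms m by (auto simp: p_def Suc_mod_if)
  then have "f p \<noteq> f (Suc j mod m)"
    using inj p(1) by (auto simp: inj_on_def)
  moreover have "{f p, f j} \<in> (\<lambda>i. {f i, f (Suc i mod m)}) ` {..<m}"
    using p by force
  moreover have "{f j, f (Suc j mod m)} \<in> (\<lambda>i. {f i, f (Suc i mod m)}) ` {..<m}"
    using assms by blast
  ultimately show ?thesis
    by (intro two_le_vertex_degree) auto
qed

end

lemma cycle_copyD:
  assumes "H \<in> cycle_copies V m" "3 \<le> m"
  shows "H \<subseteq> edges V" "card H = m" "vertex_degree H x \<noteq> 1"
proof -
  obtain f where inj: "inj_on f {..<m}" and fV: "f ` {..<m} \<subseteq> V"
    and H: "H = (\<lambda>i. {f i, f (Suc i mod m)}) ` {..<m}"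
    using assms(1) unfolding cycle_copies_def by (auto simp: atLeast0LessThan)
  show "H \<subseteq> edges V"
    unfolding H
  proof (rule image_subsetI)
    fix i assume i: "i \<in> {..<m}"
    have "Suc i mod m \<in> {..<m}" "Suc i mod m \<noteq> i"
      using i assms(2) by (auto simp: Suc_mod_if)
    then have "f i \<noteq> f (Suc i mod m)"
      using inj i by (metis inj_onD)
    then show "{f i, f (Suc i mod m)} \<in> edges V"
      using fV i \<open>Suc i mod m \<in> {..<m}\<close> by (intro doubleton_in_edges) auto
  qed
  show "card H = m"
    unfolding H using inj_on_cycle_edges[OF assms(2) inj] by (simp add: card_image)
  show "vertex_degree H x \<noteq> 1"
  proof
    assume "vertex_degree H x = 1"
    then obtain e where "e \<in> H" "x \<in> e"
      by (rule vertex_degree_eq_1E)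
    then obtain i where i: "i < m" "x \<in> {f i, f (Suc i mod m)}"
      unfolding H by auto
    moreover have "Suc i mod m < m"
      using assms(2) by simp
    ultimately obtain j where j: "j < m" "x = f j"
      by blast
    then show False
      using two_le_vertex_degree_cycle_edges[OF assms(2) inj j(1)] \<open>vertex_degree H x = 1\<close> H by simp
  qed
qed

lemma cycle_copies_nonempty:
  assumes "finite V" "m \<le> card V"
  shows "cycle_copies V m \<noteq> {}"
proof -
  obtain U where "U \<subseteq> V" "card U = m"
    using obtain_subset_with_card_n[OF assms(2)] by blast
  moreover obtain f where "bij_betw f {0..<m} U"
    using ex_bij_betw_nat_finite[of U] \<open>card U = m\<close> assms(1) \<open>U \<subseteq> V\<close>
    by (metis finite_subset)
  ultimately show ?thesis
    unfolding cycle_copies_def bij_betw_def by blast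
qed

lemma path_copiesE:
  assumes "H \<in> path_copies V m"
  obtains xs where "distinct xs" "length xs = Suc m" "set xs \<subseteq> V" "H = path_edges xs"
proof -
  obtain f where inj: "inj_on f {0..m}" and fV: "f ` {0..m} \<subseteq> V"
    and H: "H = {{f i, f (i + 1)} | i. i < m}"
    using assms unfolding path_copies_def by blast
  have "path_edges (map f [0..<Suc m]) = (\<lambda>i. {f i, f (Suc i)}) ` {0..<m}"
    using path_edges_map_upt[of f 0 m] by (simp del: upt_Suc)
  then have "H = path_edges (map f [0..<Suc m])"
    unfolding H by auto
  moreover have "distinct (map f [0..<Suc m])"
    using inj by (simp add: distinct_map atLeastLessThanSuc_atLeastAtMost del: upt_Suc)
  moreover have "set (map f [0..<Suc m]) \<subseteq> V"
    using fV by (simp add: atLeastLessThanSuc_atLeastAtMost del: upt_Suc)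
  ultimately show ?thesis
    using that[of "map f [0..<Suc m]"] by (simp del: upt_Suc)
qed

lemma path_copy_at_endpoint:
  assumes "H \<in> path_copies V m" "vertex_degree H x = 1"
  obtains ys where "ys \<in> distinct_lists (V - {x}) m" "H = path_edges (x # ys)"
proof -
  obtain xs where xs: "distinct xs" "length xs = Suc m" "set xs \<subseteq> V" "H = path_edges xs"
    using assms(1) by (rule path_copiesE)
  obtain zs where zs: "distinct zs" "length zs = Suc m" "set zs \<subseteq> V" "H = path_edges zs" "hd zs = x"
  proof (cases "x = hd xs")
    case True
    then show ?thesis using that xs by blast
  next
    case False
    then have "x = last xs"
      using vertex_degree_path_edges_eq_1[OF xs(1)] assms(2) xs(4) by blast
    then show ?thesis
      using that[of "rev xs"] xs by (simp add: path_edges_rev hd_rev)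
  qed
  then obtain ys where "zs = x # ys"
    by (cases zs) auto
  with zs show ?thesis
    using that by (auto simp: distinct_lists_def)
qed

lemma path_copyD:
  assumes "H \<in> path_copies V m"
  shows "H \<subseteq> edges V" "card H = m"
proof -
  obtain xs where "distinct xs" "length xs = Suc m" "set xs \<subseteq> V" "H = path_edges xs"
    using assms by (rule path_copiesE)
  then show "H \<subseteq> edges V" "card H = m"
    by (simp_all add: path_edges_subset_edges card_path_edges)
qed

subsection \<open>Maximizers of homogeneous edge forms\<close>

definition scale_at :: "'a \<Rightarrow> real \<Rightarrow> ('a set \<Rightarrow> real) \<Rightarrow> 'a set \<Rightarrow> real" where
  "scale_at x s \<nu> e = (if x \<in> e then s * \<nu> e else \<nu> e)"

lemma weight_scale_at:
  assumes "finite H"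
  shows "weight (scale_at x s \<nu>) H = s ^ vertex_degree H x * weight \<nu> H"
proof -
  have "weight (scale_at x s \<nu>) H = (\<Prod>e\<in>H. (if x \<in> e then s else 1) * \<nu> e)"
    unfolding weight_def scale_at_def by (intro prod.cong) auto
  also have "\<dots> = (\<Prod>e\<in>{e \<in> H. x \<in> e}. s) * weight \<nu> H"
    unfolding prod.distrib weight_def prod.inter_filter[OF assms, symmetric] ..
  finally show ?thesis
    by (simp add: vertex_degree_def)
qed

lemma weight_divide: "weight (\<lambda>e. \<nu> e / s) H = weight \<nu> H / s ^ card H"
  unfolding weight_def by (simp add: prod_dividef)

lemma sum_edges_scale_at:
  assumes "finite V" "x \<in> V"
  shows "(\<Sum>e\<in>edges V. scale_at x s \<nu> e) = (\<Sum>e\<in>edges (V - {x}). \<nu> e) + s * mubar V \<nu> x"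
proof -
  have "(\<Sum>e\<in>edges (V - {x}). scale_at x s \<nu> e) = (\<Sum>e\<in>edges (V - {x}). \<nu> e)"
    by (intro sum.cong) (auto simp: scale_at_def edges_def)
  then show ?thesis
    unfolding sum_edges_remove[OF assms] by (simp add: scale_at_def mubar_def sum_distrib_left)
qed

lemma scale_at_1: "scale_at x 1 \<nu> = \<nu>"
  by (simp add: scale_at_def fun_eq_iff)

lemma Delta_nonneg: "\<mu> \<in> Delta V \<Longrightarrow> e \<in> edges V \<Longrightarrow> 0 \<le> \<mu> e"
  by (simp add: Delta_def)

lemma Delta_sum_edges_remove:
  assumes "\<mu> \<in> Delta V" "finite V" "x \<in> V"
  shows "(\<Sum>e\<in>edges (V - {x}). \<mu> e) = 1 - mubar V \<mu> x"
  using sum_edges_scale_at[OF assms(2,3), of 1 \<mu>] assms(1) by (simp add: scale_at_1 Delta_def)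

lemma mubar_nonneg:
  assumes "\<mu> \<in> Delta V" "x \<in> V"
  shows "0 \<le> mubar V \<mu> x"
  unfolding mubar_def using assms by (auto intro!: sum_nonneg Delta_nonneg doubleton_in_edges)

lemma mubar_le_1:
  assumes "\<mu> \<in> Delta V" "finite V" "x \<in> V"
  shows "mubar V \<mu> x \<le> 1"
proof -
  have "0 \<le> (\<Sum>e\<in>edges (V - {x}). \<mu> e)"
    using assms(1) edges_mono[of "V - {x}" V] by (auto intro!: sum_nonneg Delta_nonneg)
  with Delta_sum_edges_remove[OF assms] show ?thesis
    by linarith
qed

text \<open>
  A finite set T of pairs (c, H) encodes the form sum c * mu(H). Tagging each copy with its
  coefficient keeps cycles and paths apart without having to show that no cycle copy is a path.
\<close>

definition edge_form :: "(real \<times> 'a set set) set \<Rightarrow> ('a set \<Rightarrow> real) \<Rightarrow> real" where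
  "edge_form T \<nu> = (\<Sum>(c, H)\<in>T. c * weight \<nu> H)"

locale edge_form_maximizer =
  fixes V :: "'a set" and T :: "(real \<times> 'a set set) set" and m :: nat and \<mu> :: "'a set \<Rightarrow> real"
  assumes finite_V: "finite V" and finite_T: "finite T"
    and T_edges: "\<And>c H. (c, H) \<in> T \<Longrightarrow> H \<subseteq> edges V"
    and T_card: "\<And>c H. (c, H) \<in> T \<Longrightarrow> card H = m"
    and \<mu>_Delta: "\<mu> \<in> Delta V"
    and \<mu>_max: "\<And>\<nu>. \<nu> \<in> Delta V \<Longrightarrow> edge_form T \<nu> \<le> edge_form T \<mu>"
begin

lemma finite_T_copy: "(c, H) \<in> T \<Longrightarrow> finite H"
  using T_edges finite_edges[OF finite_V] finite_subset by blast

lemma weight_nonneg: "(c, H) \<in> T \<Longrightarrow> 0 \<le> weight \<mu> H"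
  unfolding weight_def using T_edges \<mu>_Delta by (blast intro: prod_nonneg Delta_nonneg)

lemma edge_form_scale_at_div:
  "edge_form T (\<lambda>e. scale_at x s \<nu> e / r) = (\<Sum>(c, H)\<in>T. c * s ^ vertex_degree H x * weight \<nu> H) / r ^ m"
  unfolding edge_form_def sum_divide_distrib
  by (intro sum.cong refl) (auto simp: weight_divide weight_scale_at finite_T_copy T_card)

lemma edge_form_scale_at:
  "edge_form T (scale_at x s \<nu>) = (\<Sum>(c, H)\<in>T. c * s ^ vertex_degree H x * weight \<nu> H)"
  using edge_form_scale_at_div[of x s \<nu> 1] by simp

lemma edge_form_pos:
  assumes "\<And>c H. (c, H) \<in> T \<Longrightarrow> 0 \<le> c" "(c\<^sub>0, H\<^sub>0) \<in> T" "0 < c\<^sub>0"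
  shows "0 < edge_form T \<mu>"
proof -
  have "edges V \<noteq> {}"
    using \<mu>_Delta by (auto simp: Delta_def)
  then have card: "0 < card (edges V)"
    using finite_edges[OF finite_V] by (simp add: card_gt_0_iff)
  define u :: real where "u = 1 / card (edges V)"
  have "0 < u"
    using card by (simp add: u_def)
  have "(\<lambda>_. u) \<in> Delta V"
    using card \<open>0 < u\<close> by (simp add: Delta_def u_def)
  moreover have "0 < edge_form T (\<lambda>_. u)"
    unfolding edge_form_def weight_def case_prod_unfold
    using assms \<open>0 < u\<close> by (intro sum_pos2[OF finite_T assms(2)]) (auto simp: T_card)
  ultimately show ?thesis
    using \<mu>_max by fastforce
qed

context
  fixes x assumes x: "x \<in> V"
begin

lemma edge_form_scale_at_le:
  assumes "0 \<le> s" "0 < 1 - mubar V \<mu> x + s * mubar V \<mu> x"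
  shows "edge_form T (scale_at x s \<mu>) \<le> (1 - mubar V \<mu> x + s * mubar V \<mu> x) ^ m * edge_form T \<mu>"
proof -
  define r where "r = 1 - mubar V \<mu> x + s * mubar V \<mu> x"
  have "(\<lambda>e. scale_at x s \<mu> e / r) \<in> Delta V"
  proof -
    have "(\<Sum>e\<in>edges V. scale_at x s \<mu> e) = r"
      unfolding sum_edges_scale_at[OF finite_V x] Delta_sum_edges_remove[OF \<mu>_Delta finite_V x] r_def ..
    moreover have "0 \<le> scale_at x s \<mu> e" if "e \<in> edges V" for e
      using Delta_nonneg[OF \<mu>_Delta that] assms(1) by (simp add: scale_at_def)
    ultimately show ?thesis
      using assms(2) by (simp add: Delta_def r_def sum_divide_distrib[symmetric])
  qed
  then have "edge_form T (\<lambda>e. scale_at x s \<mu> e / r) \<le> edge_form T \<mu>"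
    by (rule \<mu>_max)
  then show ?thesis
    using assms(2) by (simp add: edge_form_scale_at_div edge_form_scale_at r_def divide_le_eq mult.commute)
qed

lemma weighted_degree_sum_eq:
  "(\<Sum>(c, H)\<in>T. c * vertex_degree H x * weight \<mu> H) = m * mubar V \<mu> x * edge_form T \<mu>"
proof -
  define b where "b = mubar V \<mu> x"
  define G where "G s = edge_form T (scale_at x s \<mu>)" for s
  define h where "h s = (1 - b + s * b) ^ m * edge_form T \<mu> - G s" for s
  have b: "0 \<le> b" "b \<le> 1"
    unfolding b_def using mubar_nonneg[OF \<mu>_Delta x] mubar_le_1[OF \<mu>_Delta finite_V x] by auto
  have "(h has_real_derivative
      (m * b * edge_form T \<mu> - (\<Sum>(c, H)\<in>T. c * vertex_degree H x * weight \<mu> H))) (at 1)"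
    unfolding h_def G_def edge_form_scale_at case_prod_unfold
    by (auto intro!: derivative_eq_intros simp: ac_simps)
  moreover have "h 1 \<le> h s" if "\<bar>1 - s\<bar> < 1" for s
  proof -
    have "0 < 1 - b + s * b"
    proof (cases "b = 0")
      case False
      moreover have "0 < s"
        using that by linarith
      ultimately show ?thesis
        using b mult_pos_pos[of s b] by linarith
    qed simp
    then have "G s \<le> (1 - b + s * b) ^ m * edge_form T \<mu>"
      using edge_form_scale_at_le[of s] that unfolding G_def b_def by simp
    moreover have "G 1 = edge_form T \<mu>"
      unfolding G_def scale_at_1 ..
    ultimately show ?thesis
      unfolding h_def by simp
  qed
  ultimately have "m * b * edge_form T \<mu> - (\<Sum>(c, H)\<in>T. c * vertex_degree H x * weight \<mu> H) = 0"
    by (intro DERIV_local_min[of h _ 1 1]) auto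
  then show ?thesis
    unfolding b_def by simp
qed

lemma edge_form_le_degree_split:
  assumes "mubar V \<mu> x < 1" and c_nonneg: "\<And>c H. (c, H) \<in> T \<Longrightarrow> 0 \<le> c"
  shows "edge_form T \<mu> \<le> (1 - mubar V \<mu> x) ^ m * edge_form T \<mu> + m * mubar V \<mu> x * edge_form T \<mu> / 2
           + (\<Sum>(c, H)\<in>{(c, H) \<in> T. vertex_degree H x = 1}. c * weight \<mu> H) / 2"
proof -
  have degree_split: "y \<le> 0 ^ d * y + d * y / 2 + (if d = 1 then y else 0) / 2" if "0 \<le> y" for y :: real and d :: nat
  proof -
    consider "d = 0" | "d = 1" | "2 \<le> d" by linarith
    then show ?thesis
    proof cases
      case 3
      then have "2 * y \<le> d * y"
        using that by (intro mult_right_mono) auto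
      with 3 show ?thesis by (simp add: power_0_left)
    qed simp_all
  qed
  have "edge_form T \<mu> = (\<Sum>(c, H)\<in>T. c * weight \<mu> H)"
    by (simp add: edge_form_def)
  also have "\<dots> \<le> (\<Sum>(c, H)\<in>T. c * 0 ^ vertex_degree H x * weight \<mu> H
      + c * vertex_degree H x * weight \<mu> H / 2 + (if vertex_degree H x = 1 then c * weight \<mu> H else 0) / 2)"
  proof (rule sum_mono, clarify)
    fix c H assume "(c, H) \<in> T"
    then have "0 \<le> c * weight \<mu> H"
      by (simp add: c_nonneg weight_nonneg)
    from degree_split[OF this, of "vertex_degree H x"]
    show "c * weight \<mu> H \<le> c * 0 ^ vertex_degree H x * weight \<mu> H
      + c * vertex_degree H x * weight \<mu> H / 2 + (if vertex_degree H x = 1 then c * weight \<mu> H else 0) / 2"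
      by (simp only: ac_simps)
  qed
  also have "\<dots> = (\<Sum>(c, H)\<in>T. c * 0 ^ vertex_degree H x * weight \<mu> H)
      + (\<Sum>(c, H)\<in>T. c * vertex_degree H x * weight \<mu> H) / 2
      + (\<Sum>(c, H)\<in>{(c, H) \<in> T. vertex_degree H x = 1}. c * weight \<mu> H) / 2"
    by (simp add: case_prod_unfold sum.distrib sum_divide_distrib sum.inter_filter[OF finite_T])
  also have "\<dots> \<le> (1 - mubar V \<mu> x) ^ m * edge_form T \<mu> + m * mubar V \<mu> x * edge_form T \<mu> / 2
      + (\<Sum>(c, H)\<in>{(c, H) \<in> T. vertex_degree H x = 1}. c * weight \<mu> H) / 2"
    using edge_form_scale_at_le[of 0] edge_form_scale_at[of x 0 \<mu>] assms(1) weighted_degree_sum_eq by simp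
  finally show ?thesis .
qed

end

end

subsection \<open>The cycle-path objective\<close>

definition objective_terms :: "'a set \<Rightarrow> nat \<Rightarrow> (real \<times> 'a set set) set" where
  "objective_terms V m = Pair (2 * real m) ` cycle_copies V m \<union> Pair 1 ` path_copies V m"

lemma finite_cycle_copies: "finite V \<Longrightarrow> finite (cycle_copies V m)"
  unfolding cycle_copies_def by (rule finite_subset[of _ "Pow (Pow V)"]) auto

lemma finite_path_copies: "finite V \<Longrightarrow> finite (path_copies V m)"
  unfolding path_copies_def by (rule finite_subset[of _ "Pow (Pow V)"]) auto

lemma objective_eq_edge_form:
  assumes "finite V"
  shows "objective V m \<nu> = edge_form (objective_terms V m) \<nu>"
proof -
  have "2 * real m \<noteq> 1"
    by (metis even_mult_iff even_numeral odd_one of_nat_1 of_nat_eq_iff of_nat_mult of_nat_numeral)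
  then have "Pair (2 * real m) ` cycle_copies V m \<inter> Pair 1 ` path_copies V m = {}"
    by auto
  then show ?thesis
    unfolding objective_def beta_cycle_def beta_path_def edge_form_def objective_terms_def
    using finite_cycle_copies[OF assms] finite_path_copies[OF assms]
    by (simp add: sum.union_disjoint sum.reindex inj_on_def sum_distrib_left)
qed

lemma objective_endpoint_sum_le:
  assumes "3 \<le> m" "finite V" "x \<in> V" "\<mu> \<in> Delta V"
  shows "(\<Sum>(c, H)\<in>{(c, H) \<in> objective_terms V m. vertex_degree H x = 1}. c * weight \<mu> H)
           \<le> mubar V \<mu> x * ((1 - mubar V \<mu> x) / (real m - 1)) ^ (m - 1)"
proof -
  let ?ends = "(\<lambda>ys. path_edges (x # ys)) ` distinct_lists (V - {x}) m"
  have ends_edges: "path_edges (x # ys) \<subseteq> edges V" if "ys \<in> distinct_lists (V - {x}) m" for ys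
    using that assms(3) by (intro path_edges_subset_edges) (auto simp: distinct_lists_def)
  have ends_nonneg: "0 \<le> weight \<mu> (path_edges (x # ys))" if "ys \<in> distinct_lists (V - {x}) m" for ys
    using ends_edges[OF that] assms(4) unfolding weight_def by (blast intro: prod_nonneg Delta_nonneg)
  have "{(c, H) \<in> objective_terms V m. vertex_degree H x = 1}
      = Pair 1 ` {H \<in> path_copies V m. vertex_degree H x = 1}"
  proof -
    have "vertex_degree H x \<noteq> 1" if "H \<in> cycle_copies V m" for H
      using cycle_copyD(3)[OF that assms(1)] .
    then show ?thesis
      by (auto simp: objective_terms_def)
  qed
  then have "(\<Sum>(c, H)\<in>{(c, H) \<in> objective_terms V m. vertex_degree H x = 1}. c * weight \<mu> H)
      = (\<Sum>H\<in>{H \<in> path_copies V m. vertex_degree H x = 1}. weight \<mu> H)"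
    by (simp add: sum.reindex inj_on_def)
  also have "\<dots> \<le> sum (weight \<mu>) ?ends"
  proof (rule sum_mono2)
    show "finite ?ends"
      using assms(2) by (simp add: finite_distinct_lists)
    show "{H \<in> path_copies V m. vertex_degree H x = 1} \<subseteq> ?ends"
      by (blast elim: path_copy_at_endpoint)
    show "0 \<le> weight \<mu> H" if "H \<in> ?ends - {H \<in> path_copies V m. vertex_degree H x = 1}" for H
      using that ends_nonneg by blast
  qed
  also have "\<dots> \<le> (\<Sum>ys\<in>distinct_lists (V - {x}) m. weight \<mu> (path_edges (x # ys)))"
    using sum_image_le[of "distinct_lists (V - {x}) m" "weight \<mu>" "\<lambda>ys. path_edges (x # ys)"]
      finite_distinct_lists[of "V - {x}" m] ends_nonneg assms(2) by (simp add: comp_def)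
  also have "\<dots> \<le> (\<Sum>v\<in>V - {x}. \<mu> {x, v}) * ((\<Sum>e\<in>edges (V - {x}). \<mu> e) / real (m - 1)) ^ (m - 1)"
  proof -
    have "insert x (V - {x}) = V" "Suc (m - 1) = m"
      using assms(1,3) by auto
    then show ?thesis
      using sum_path_weights_le[of "V - {x}" x \<mu> "m - 1"] assms(2) Delta_nonneg[OF assms(4)]
      by simp
  qed
  also have "\<dots> = mubar V \<mu> x * ((1 - mubar V \<mu> x) / (real m - 1)) ^ (m - 1)"
    using assms(1) Delta_sum_edges_remove[OF assms(4,2,3)] by (simp add: mubar_def of_nat_diff)
  finally show ?thesis .
qed

lemma objective_terms_nonneg: "(c, H) \<in> objective_terms V m \<Longrightarrow> 0 \<le> c"
  by (auto simp: objective_terms_def)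

lemma edge_form_maximizer_objective:
  assumes "3 \<le> m" "finite V" "\<mu> \<in> Delta V"
    and "\<forall>\<nu>\<in>Delta V. objective V m \<nu> \<le> objective V m \<mu>"
  shows "edge_form_maximizer V (objective_terms V m) m \<mu>"
proof
  have copies: "H \<in> cycle_copies V m \<or> H \<in> path_copies V m" if "(c, H) \<in> objective_terms V m" for c H
    using that by (auto simp: objective_terms_def)
  show "finite (objective_terms V m)"
    using assms(2) by (simp add: objective_terms_def finite_cycle_copies finite_path_copies)
  show "H \<subseteq> edges V" if "(c, H) \<in> objective_terms V m" for c H
    using copies[OF that] cycle_copyD(1)[OF _ assms(1)] path_copyD(1) by blast
  show "card H = m" if "(c, H) \<in> objective_terms V m" for c H
    using copies[OF that] cycle_copyD(2)[OF _ assms(1)] path_copyD(2) by blast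
  show "edge_form (objective_terms V m) \<nu> \<le> edge_form (objective_terms V m) \<mu>" if "\<nu> \<in> Delta V" for \<nu>
    using that assms(4) unfolding objective_eq_edge_form[OF assms(2)] by blast
qed (use assms(2,3) in simp_all)

lemma objective_pos:
  assumes "3 \<le> m" "finite V" "m \<le> card V" "\<mu> \<in> Delta V"
    and "\<forall>\<nu>\<in>Delta V. objective V m \<nu> \<le> objective V m \<mu>"
  shows "0 < objective V m \<mu>"
proof -
  interpret edge_form_maximizer V "objective_terms V m" m \<mu>
    using assms(1,2,4,5) by (rule edge_form_maximizer_objective)
  obtain H where "H \<in> cycle_copies V m"
    using cycle_copies_nonempty assms(2,3) by blast
  then have "(2 * real m, H) \<in> objective_terms V m"
    by (simp add: objective_terms_def)
  then show ?thesis
    unfolding objective_eq_edge_form[OF assms(2)]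
    using objective_terms_nonneg assms(1) by (intro edge_form_pos) auto
qed

lemma objective_le:
  assumes "3 \<le> m" "finite V" "\<mu> \<in> Delta V"
    and "\<forall>\<nu>\<in>Delta V. objective V m \<nu> \<le> objective V m \<mu>"
    and "x \<in> V" "mubar V \<mu> x < 1"
  shows "objective V m \<mu> \<le> (1 - mubar V \<mu> x) ^ m * objective V m \<mu>
           + m * mubar V \<mu> x * objective V m \<mu> / 2
           + mubar V \<mu> x * ((1 - mubar V \<mu> x) / (real m - 1)) ^ (m - 1) / 2"
proof -
  interpret edge_form_maximizer V "objective_terms V m" m \<mu>
    using assms(1-4) by (rule edge_form_maximizer_objective)
  have "edge_form (objective_terms V m) \<mu> \<le> (1 - mubar V \<mu> x) ^ m * edge_form (objective_terms V m) \<mu>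
      + m * mubar V \<mu> x * edge_form (objective_terms V m) \<mu> / 2
      + (\<Sum>(c, H)\<in>{(c, H) \<in> objective_terms V m. vertex_degree H x = 1}. c * weight \<mu> H) / 2"
    using assms(5,6) objective_terms_nonneg by (rule edge_form_le_degree_split)
  then show ?thesis
    using objective_endpoint_sum_le[OF assms(1,2,5,3)]
    unfolding objective_eq_edge_form[OF assms(2)] by linarith
qed

theorem lemma4p5:
  fixes V :: "'a set" and m :: nat and \<mu> :: "'a set \<Rightarrow> real" and x :: 'a
  assumes "m \<ge> 3"
    and "finite V" and "card V \<ge> m"
    and "\<mu> \<in> Delta V"
    and "\<forall>\<nu>\<in>Delta V. objective V m \<nu> \<le> objective V m \<mu>"
    and "x \<in> V"
  shows "real m / 2 * mubar V \<mu> x + (1 - mubar V \<mu> x) ^ m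
           + 1 / (2 * objective V m \<mu>) * mubar V \<mu> x
             * ((1 - mubar V \<mu> x) / (real m - 1)) ^ (m - 1) \<ge> 1"
proof -
  define b where "b = mubar V \<mu> x"
  define X where "X = ((1 - b) / (real m - 1)) ^ (m - 1)"
  define obj where "obj = objective V m \<mu>"
  have "b \<le> 1"
    unfolding b_def using mubar_le_1[OF assms(4,2,6)] .
  show ?thesis
  proof (cases "b = 1")
    case True
    then show ?thesis
      using assms(1) unfolding b_def[symmetric] by (simp add: power_0_left)
  next
    case False
    have "0 < obj"
      unfolding obj_def using objective_pos assms(1-5) .
    have "obj * 1 \<le> (1 - b) ^ m * obj + m * b * obj / 2 + b * X / 2"
      using objective_le[OF assms(1,2,4,5,6)] False \<open>b \<le> 1\<close>
      unfolding obj_def b_def X_def by simp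
    also have "\<dots> = obj * (real m / 2 * b + (1 - b) ^ m + 1 / (2 * obj) * b * X)"
      using \<open>0 < obj\<close> by (simp add: field_simps)
    finally show ?thesis
      unfolding b_def[symmetric] obj_def[symmetric] X_def[symmetric] using \<open>0 < obj\<close> by simp
  qed
qed

end
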